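(* Let $((X_t,\sigma_t))_{t\in\mathbb Z}$ be the stationary ergodic EGARCH process with parameters satisfying $0\le\beta<1$ and $\delta\ge|\gamma|$. If $$\mathbb E\Big[\log\max\Big\{\beta,\ 2^{-1}\exp\Big(2^{-1}\sum_{k=0}^\infty\beta^k(\gamma Z_{-k-1}+\delta|Z_{-k-1}|)\Big)(\gamma Z_0+\delta|Z_0|)-\beta\Big\}\Big]<0,$$ then the process is invertible, namely $|\hat\sigma_t^2-\sigma_t^2|\xrightarrow{\text{e.a.s.}}0$ as $t\to\infty$.
   Context: $(Z_t)$ i.i.d. with $\mathbb EZ_0=0$, $\mathbb EZ_0^2=1$. EGARCH: $X_t=\sigma_tZ_t$, $\log\sigma_t^2=\alpha+\beta\log\sigma_{t-1}^2+\gamma Z_{t-1}+\delta|Z_{t-1}|$, $t\in\mathbb Z$, $\alpha,\gamma,\delta\in\mathbb R$; its stationary solution is $\log\sigma_t^2=\alpha(1-\beta)^{-1}+\sum_{k\ge0}\beta^k(\gamma Z_{t-1-k}+\delta|Z_{t-1-k}|)$. Approximation from observations: choose $\log\hat\sigma_0^2\in[\alpha(1-\beta)^{-1},\infty)$ and set $\log\hat\sigma_{t+1}^2=\alpha+\beta\log\hat\sigma_t^2+(\gamma X_t+\delta|X_t|)\exp(-\log\hat\sigma_t^2/2)$, $t\ge0$. $v_t\xrightarrow{\text{e.a.s.}}0$ means there is $\gamma'>1$ with $\gamma'^t|v_t|\to0$ a.s. *)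

theory Defs
  imports "HOL-Probability.Probability"
begin

definition egarch_logsig ::
  "real \<Rightarrow> real \<Rightarrow> real \<Rightarrow> real \<Rightarrow> (int \<Rightarrow> 'a \<Rightarrow> real) \<Rightarrow> int \<Rightarrow> 'a \<Rightarrow> real" where
  "egarch_logsig \<alpha> \<beta> \<gamma> \<delta> Z t \<omega> =
     \<alpha> / (1 - \<beta>) +
     (\<Sum>k. \<beta> ^ k * (\<gamma> * Z (t - 1 - int k) \<omega> + \<delta> * \<bar>Z (t - 1 - int k) \<omega>\<bar>))"

definition egarch_X ::
  "real \<Rightarrow> real \<Rightarrow> real \<Rightarrow> real \<Rightarrow> (int \<Rightarrow> 'a \<Rightarrow> real) \<Rightarrow> int \<Rightarrow> 'a \<Rightarrow> real" where
  "egarch_X \<alpha> \<beta> \<gamma> \<delta> Z t \<omega> = exp (egarch_logsig \<alpha> \<beta> \<gamma> \<delta> Z t \<omega> / 2) * Z t \<omega>"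

primrec egarch_loghat ::
  "real \<Rightarrow> real \<Rightarrow> real \<Rightarrow> real \<Rightarrow> (int \<Rightarrow> 'a \<Rightarrow> real) \<Rightarrow> real \<Rightarrow> nat \<Rightarrow> 'a \<Rightarrow> real" where
  "egarch_loghat \<alpha> \<beta> \<gamma> \<delta> Z s0 0 \<omega> = s0"
| "egarch_loghat \<alpha> \<beta> \<gamma> \<delta> Z s0 (Suc t) \<omega> =
     \<alpha> + \<beta> * egarch_loghat \<alpha> \<beta> \<gamma> \<delta> Z s0 t \<omega>
     + (\<gamma> * egarch_X \<alpha> \<beta> \<gamma> \<delta> Z (int t) \<omega> + \<delta> * \<bar>egarch_X \<alpha> \<beta> \<gamma> \<delta> Z (int t) \<omega>\<bar>)
       * exp (- egarch_loghat \<alpha> \<beta> \<gamma> \<delta> Z s0 t \<omega> / 2)"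

definition egarch_inv_arg ::
  "real \<Rightarrow> real \<Rightarrow> real \<Rightarrow> (int \<Rightarrow> 'a \<Rightarrow> real) \<Rightarrow> 'a \<Rightarrow> real" where
  "egarch_inv_arg \<beta> \<gamma> \<delta> Z \<omega> =
     max \<beta> ((1/2) * exp ((1/2) * (\<Sum>k. \<beta> ^ k * (\<gamma> * Z (- int k - 1) \<omega> + \<delta> * \<bar>Z (- int k - 1) \<omega>\<bar>)))
            * (\<gamma> * Z 0 \<omega> + \<delta> * \<bar>Z 0 \<omega>\<bar>) - \<beta>)"

text \<open>"E[log Y] < 0" for a nonnegative random variable Y, with log 0 = -infinity:
  E[(log Y)^+] < E[(log Y)^-] (this forces E[(log Y)^+] finite, so E[log Y] is well defined and negative).\<close>
definition expect_log_neg :: "'a measure \<Rightarrow> ('a \<Rightarrow> real) \<Rightarrow> bool" where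
  "expect_log_neg M Y \<longleftrightarrow>
     (\<integral>\<^sup>+ \<omega>. (if Y \<omega> > 0 then ennreal (max 0 (ln (Y \<omega>))) else 0) \<partial>M)
     < (\<integral>\<^sup>+ \<omega>. (if Y \<omega> > 0 then ennreal (max 0 (- ln (Y \<omega>))) else \<infinity>) \<partial>M)"

end

(*
  Write D_t = log sigma_hat_t^2 - log sigma_t^2. Both recursions live in [alpha/(1-beta), oo), where
  x |-> alpha + beta x + (gamma X_t + delta |X_t|) exp (-x/2) is Lipschitz with constant
  Lambda_t = max (beta, exp (S_t / 2) g(Z_t) / 2 - beta), S_t = log sigma_t^2 - alpha/(1-beta),
  g(z) = gamma z + delta |z|. Hence |D_t| <= |D_0| exp (sum_{i<t} log Lambda_i), and the hypothesis
  E log Lambda_0 < 0 makes the exponent decrease linearly almost surely.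

  Instead of the ergodic theorem, a strong law for m-dependent sequences (Chebyshev along squares
  and Borel-Cantelli) is applied to the truncated rates Lambda_t^(m), which only see Z_t, ..., Z_(t-m):
  log Lambda_t <= log Lambda_t^(m) + beta^m S_(t-m), and the averages of S_(t-m) are bounded, so for
  large m the error is small. Finally g(Z_t) = o(t) by Borel-Cantelli, so log sigma_t^2 grows with
  small linear slope and the geometric decay of D_t transfers to sigma_hat_t^2 - sigma_t^2.
*)
theory Submission
  imports Defs "HOL-Library.Discrete_Functions"
begin

section \<open>A strong law for sequences uncorrelated beyond a fixed lag\<close>

lemma (in prob_space) AE_eventually_abs_less_of_summable_second_moments:
  fixes Y :: "nat \<Rightarrow> 'a \<Rightarrow> real" and c :: "nat \<Rightarrow> real"
  assumes [measurable]: "\<And>k. Y k \<in> borel_measurable M"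
    and sq: "\<And>k. integrable M (\<lambda>\<omega>. (Y k \<omega>)\<^sup>2)"
    and pos: "\<And>k. 0 < c k"
    and summ: "summable (\<lambda>k. (\<integral>\<omega>. (Y k \<omega>)\<^sup>2 \<partial>M) / (c k)\<^sup>2)"
  shows "AE \<omega> in M. eventually (\<lambda>k. \<bar>Y k \<omega>\<bar> < c k) sequentially"
proof -
  define A where "A k = {\<omega> \<in> space M. c k \<le> \<bar>Y k \<omega>\<bar>}" for k
  have [measurable]: "A k \<in> events" for k
    unfolding A_def by measurable
  have "summable (\<lambda>k. prob (A k))"
  proof (rule summable_comparison_test'[OF summ])
    show "norm (prob (A k)) \<le> (\<integral>\<omega>. (Y k \<omega>)\<^sup>2 \<partial>M) / (c k)\<^sup>2" for k
      unfolding A_def using second_moment_method[OF _ sq pos] by simp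
  qed
  then have "AE \<omega> in M. eventually (\<lambda>k. \<omega> \<in> space M - A k) sequentially"
    by (intro borel_cantelli_AE1) (auto simp: less_top[symmetric])
  then show ?thesis
    by eventually_elim (auto simp: A_def not_le elim: eventually_mono)
qed

lemma (in prob_space)
  fixes X Y :: "'a \<Rightarrow> real"
  assumes [measurable]: "X \<in> borel_measurable M" "Y \<in> borel_measurable M"
    and sq: "integrable M (\<lambda>\<omega>. (X \<omega>)\<^sup>2)" "integrable M (\<lambda>\<omega>. (Y \<omega>)\<^sup>2)"
  shows integrable_mult_of_square_integrable: "integrable M (\<lambda>\<omega>. X \<omega> * Y \<omega>)"
    and integral_mult_le_mean_of_squares:
      "(\<integral>\<omega>. X \<omega> * Y \<omega> \<partial>M) \<le> ((\<integral>\<omega>. (X \<omega>)\<^sup>2 \<partial>M) + (\<integral>\<omega>. (Y \<omega>)\<^sup>2 \<partial>M)) / 2"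
proof -
  have le: "\<bar>X \<omega> * Y \<omega>\<bar> \<le> ((X \<omega>)\<^sup>2 + (Y \<omega>)\<^sup>2) / 2" for \<omega>
    using sum_squares_bound[of "\<bar>X \<omega>\<bar>" "\<bar>Y \<omega>\<bar>"] by (simp add: abs_mult)
  show int: "integrable M (\<lambda>\<omega>. X \<omega> * Y \<omega>)"
    by (rule Bochner_Integration.integrable_bound[where f = "\<lambda>\<omega>. ((X \<omega>)\<^sup>2 + (Y \<omega>)\<^sup>2) / 2"])
      (use sq le in simp_all)
  have "X \<omega> * Y \<omega> \<le> ((X \<omega>)\<^sup>2 + (Y \<omega>)\<^sup>2) / 2" for \<omega>
    using le[of \<omega>] abs_ge_self[of "X \<omega> * Y \<omega>"] by linarith
  then have "(\<integral>\<omega>. X \<omega> * Y \<omega> \<partial>M) \<le> (\<integral>\<omega>. ((X \<omega>)\<^sup>2 + (Y \<omega>)\<^sup>2) / 2 \<partial>M)"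
    using int sq by (intro integral_mono) auto
  then show "(\<integral>\<omega>. X \<omega> * Y \<omega> \<partial>M) \<le> ((\<integral>\<omega>. (X \<omega>)\<^sup>2 \<partial>M) + (\<integral>\<omega>. (Y \<omega>)\<^sup>2 \<partial>M)) / 2"
    using sq by simp
qed

lemma sum_if_close_le:
  fixes C :: real and i m n :: nat
  assumes "0 \<le> C"
  shows "(\<Sum>j<n. if j \<le> i + m \<and> i \<le> j + m then C else 0) \<le> (2 * m + 1) * C"
proof -
  have "card {j \<in> {..<n}. j \<le> i + m \<and> i \<le> j + m} \<le> card {i - m..i + m}"
    by (intro card_mono) auto
  then have "card {j \<in> {..<n}. j \<le> i + m \<and> i \<le> j + m} \<le> 2 * m + 1"
    by simp
  then show ?thesis
    using assms by (simp add: sum.inter_filter[symmetric] mult_right_mono)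
qed

lemma (in prob_space) second_moment_centered_sum_le:
  fixes v :: "nat \<Rightarrow> 'a \<Rightarrow> real" and m :: nat and \<mu> C :: real
  assumes [measurable]: "\<And>i. v i \<in> borel_measurable M"
    and sq: "\<And>i. integrable M (\<lambda>\<omega>. (v i \<omega>)\<^sup>2)"
    and mean: "\<And>i. (\<integral>\<omega>. v i \<omega> \<partial>M) = \<mu>"
    and sq_le: "\<And>i. (\<integral>\<omega>. (v i \<omega>)\<^sup>2 \<partial>M) \<le> C"
    and uncorr: "\<And>i j. i + m < j \<Longrightarrow> (\<integral>\<omega>. v i \<omega> * v j \<omega> \<partial>M) = \<mu>\<^sup>2"
  shows "integrable M (\<lambda>\<omega>. (\<Sum>i<n. v i \<omega> - \<mu>)\<^sup>2)"
    and "(\<integral>\<omega>. (\<Sum>i<n. v i \<omega> - \<mu>)\<^sup>2 \<partial>M) \<le> real n * ((2 * m + 1) * C)"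
proof -
  have int: "integrable M (v i)" for i
    using square_integrable_imp_integrable[OF _ sq] by simp
  have int_prod: "integrable M (\<lambda>\<omega>. v i \<omega> * v j \<omega>)" for i j
    by (rule integrable_mult_of_square_integrable) (simp_all add: sq)
  define cov where "cov i j = (\<integral>\<omega>. (v i \<omega> - \<mu>) * (v j \<omega> - \<mu>) \<partial>M)" for i j
  have expand: "(v i \<omega> - \<mu>) * (v j \<omega> - \<mu>) = v i \<omega> * v j \<omega> - \<mu> * v i \<omega> - \<mu> * v j \<omega> + \<mu>\<^sup>2"
    for i j \<omega> by (simp add: algebra_simps power2_eq_square)
  have int_cov: "integrable M (\<lambda>\<omega>. (v i \<omega> - \<mu>) * (v j \<omega> - \<mu>))" for i j
    unfolding expand using int int_prod by simp
  have cov_eq: "cov i j = (\<integral>\<omega>. v i \<omega> * v j \<omega> \<partial>M) - \<mu>\<^sup>2" for i j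
    unfolding cov_def expand using int int_prod mean prob_space by (simp add: power2_eq_square)
  have cov_le: "cov i j \<le> (if j \<le> i + m \<and> i \<le> j + m then C else 0)" for i j
  proof (cases "j \<le> i + m \<and> i \<le> j + m")
    case True
    have "cov i j \<le> (\<integral>\<omega>. v i \<omega> * v j \<omega> \<partial>M)"
      using cov_eq[of i j] by simp
    also have "\<dots> \<le> ((\<integral>\<omega>. (v i \<omega>)\<^sup>2 \<partial>M) + (\<integral>\<omega>. (v j \<omega>)\<^sup>2 \<partial>M)) / 2"
      by (rule integral_mult_le_mean_of_squares) (simp_all add: sq)
    also have "\<dots> \<le> C"
      using sq_le[of i] sq_le[of j] by simp
    finally show ?thesis
      using True by simp
  next
    case False
    then have "i + m < j \<or> j + m < i"
      by auto
    then show ?thesis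
      using False cov_eq[of i j] uncorr[of i j] uncorr[of j i] by (auto simp: mult.commute)
  qed
  have square: "(\<Sum>i<n. v i \<omega> - \<mu>)\<^sup>2 = (\<Sum>i<n. \<Sum>j<n. (v i \<omega> - \<mu>) * (v j \<omega> - \<mu>))" for \<omega>
    by (simp add: power2_eq_square sum_product)
  show "integrable M (\<lambda>\<omega>. (\<Sum>i<n. v i \<omega> - \<mu>)\<^sup>2)"
    unfolding square using int_cov by auto
  have "0 \<le> C"
    by (rule order_trans[OF Bochner_Integration.integral_nonneg sq_le[of 0]]) simp
  have "(\<integral>\<omega>. (\<Sum>i<n. v i \<omega> - \<mu>)\<^sup>2 \<partial>M) = (\<Sum>i<n. \<Sum>j<n. cov i j)"
    unfolding square cov_def using int_cov by simp
  also have "\<dots> \<le> (\<Sum>i<n. \<Sum>j<n. if j \<le> i + m \<and> i \<le> j + m then C else 0)"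
    by (intro sum_mono cov_le)
  also have "\<dots> \<le> (\<Sum>i<n. (2 * m + 1) * C)"
    using \<open>0 \<le> C\<close> by (intro sum_mono sum_if_close_le)
  finally show "(\<integral>\<omega>. (\<Sum>i<n. v i \<omega> - \<mu>)\<^sup>2 \<partial>M) \<le> real n * ((2 * m + 1) * C)"
    by simp
qed

lemma (in prob_space) AE_eventually_abs_centered_sum_at_squares_less:
  fixes v :: "nat \<Rightarrow> 'a \<Rightarrow> real" and m :: nat and \<mu> C e :: real
  assumes [measurable]: "\<And>i. v i \<in> borel_measurable M"
    and sq: "\<And>i. integrable M (\<lambda>\<omega>. (v i \<omega>)\<^sup>2)"
    and mean: "\<And>i. (\<integral>\<omega>. v i \<omega> \<partial>M) = \<mu>"
    and sq_le: "\<And>i. (\<integral>\<omega>. (v i \<omega>)\<^sup>2 \<partial>M) \<le> C"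
    and uncorr: "\<And>i j. i + m < j \<Longrightarrow> (\<integral>\<omega>. v i \<omega> * v j \<omega> \<partial>M) = \<mu>\<^sup>2"
    and "0 < e"
  shows "AE \<omega> in M. eventually (\<lambda>k. \<bar>\<Sum>i<(Suc k)\<^sup>2. v i \<omega> - \<mu>\<bar> < real ((Suc k)\<^sup>2) * e) sequentially"
proof (rule AE_eventually_abs_less_of_summable_second_moments)
  note second_moment = second_moment_centered_sum_le[where v = v and m = m and \<mu> = \<mu> and C = C,
      OF assms(1) sq mean sq_le uncorr]
  define B where "B = real (2 * m + 1) * C"
  show "integrable M (\<lambda>\<omega>. (\<Sum>i<(Suc k)\<^sup>2. v i \<omega> - \<mu>)\<^sup>2)" for k
    by (rule second_moment(1))
  show "0 < real ((Suc k)\<^sup>2) * e" for k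
    using \<open>0 < e\<close> by simp
  have frac: "(N * B) / (N * x)\<^sup>2 = B / x\<^sup>2 * inverse N" if "N \<noteq> 0" for N x :: real
    using that by (simp add: power2_eq_square field_simps)
  have bound: "(\<integral>\<omega>. (\<Sum>i<(Suc k)\<^sup>2. v i \<omega> - \<mu>)\<^sup>2 \<partial>M) / (real ((Suc k)\<^sup>2) * e)\<^sup>2
      \<le> B / e\<^sup>2 * inverse (real ((Suc k)\<^sup>2))" for k
  proof -
    have "(\<integral>\<omega>. (\<Sum>i<(Suc k)\<^sup>2. v i \<omega> - \<mu>)\<^sup>2 \<partial>M) / (real ((Suc k)\<^sup>2) * e)\<^sup>2
        \<le> (real ((Suc k)\<^sup>2) * B) / (real ((Suc k)\<^sup>2) * e)\<^sup>2"
      using second_moment(2)[of "(Suc k)\<^sup>2"] unfolding B_def by (intro divide_right_mono) auto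
    also have "\<dots> = B / e\<^sup>2 * inverse (real ((Suc k)\<^sup>2))"
      by (rule frac) simp
    finally show ?thesis .
  qed
  have "summable (\<lambda>k. inverse (real (Suc k) ^ 2))"
    by (subst summable_Suc_iff) (rule inverse_power_summable, simp)
  then have "summable (\<lambda>k. B / e\<^sup>2 * inverse (real ((Suc k)\<^sup>2)))"
    by (intro summable_mult) simp
  then show "summable (\<lambda>k. (\<integral>\<omega>. (\<Sum>i<(Suc k)\<^sup>2. v i \<omega> - \<mu>)\<^sup>2 \<partial>M) / (real ((Suc k)\<^sup>2) * e)\<^sup>2)"
    by (rule summable_comparison_test'[where N = 0]) (use bound in simp)
qed simp

lemma eventually_sum_le_of_eventually_sum_at_squares_le:
  fixes v :: "nat \<Rightarrow> real" and a b :: real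
  assumes nonneg: "\<And>i. 0 \<le> v i" and "0 \<le> a" "a < b"
    and squares: "eventually (\<lambda>k. (\<Sum>i<(Suc k)\<^sup>2. v i) \<le> real ((Suc k)\<^sup>2) * a) sequentially"
  shows "eventually (\<lambda>n. (\<Sum>i<n. v i) \<le> real n * b) sequentially"
proof -
  have "eventually (\<lambda>k. 3 * a / (b - a) \<le> real k) sequentially"
    by (rule eventually_compose_filterlim[OF eventually_ge_at_top filterlim_real_sequentially])
  moreover have "eventually (\<lambda>k. 1 \<le> k) sequentially"
    by (rule eventually_ge_at_top)
  ultimately have "eventually (\<lambda>k. (\<Sum>i<(Suc k)\<^sup>2. v i) \<le> real (k\<^sup>2) * b) sequentially"
    using squares
  proof eventually_elim
    case (elim k)
    have "3 * a \<le> real k * (b - a)"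
      using elim(1) \<open>a < b\<close> by (simp add: field_simps)
    then have "real k * (3 * a) \<le> real k * (real k * (b - a))"
      by (rule mult_left_mono) simp
    moreover have "(2 * real k + 1) * a \<le> 3 * real k * a"
      using elim(2) \<open>0 \<le> a\<close> by (intro mult_right_mono) auto
    ultimately have "(2 * real k + 1) * a \<le> real k * (real k * (b - a))"
      by simp
    then have "real ((Suc k)\<^sup>2) * a \<le> real (k\<^sup>2) * b"
      by (simp add: power2_eq_square algebra_simps)
    then show ?case using elim(3) by linarith
  qed
  moreover have "filterlim floor_sqrt sequentially sequentially"
    unfolding filterlim_at_top
    by (auto intro!: eventually_sequentiallyI[of "_\<^sup>2"] le_floor_sqrtI)
  ultimately have "eventually (\<lambda>n. (\<Sum>i<(Suc (floor_sqrt n))\<^sup>2. v i) \<le> real ((floor_sqrt n)\<^sup>2) * b) sequentially"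
    by (rule eventually_compose_filterlim)
  then show ?thesis
  proof (rule eventually_mono)
    fix n assume le: "(\<Sum>i<(Suc (floor_sqrt n))\<^sup>2. v i) \<le> real ((floor_sqrt n)\<^sup>2) * b"
    have "(\<Sum>i<n. v i) \<le> (\<Sum>i<(Suc (floor_sqrt n))\<^sup>2. v i)"
      using Suc_floor_sqrt_power2_gt[of n] nonneg by (intro sum_mono2) auto
    also have "\<dots> \<le> real n * b"
      using floor_sqrt_power2_le[of n] \<open>0 \<le> a\<close> \<open>a < b\<close>
      by (intro order_trans[OF le] mult_right_mono) simp_all
    finally show "(\<Sum>i<n. v i) \<le> real n * b" .
  qed
qed

lemma (in prob_space) AE_eventually_sum_le_of_uncorrelated_beyond:
  fixes v :: "nat \<Rightarrow> 'a \<Rightarrow> real" and m :: nat and \<mu> C \<epsilon> :: real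
  assumes [measurable]: "\<And>i. v i \<in> borel_measurable M"
    and nonneg: "\<And>i \<omega>. 0 \<le> v i \<omega>"
    and sq: "\<And>i. integrable M (\<lambda>\<omega>. (v i \<omega>)\<^sup>2)"
    and mean: "\<And>i. (\<integral>\<omega>. v i \<omega> \<partial>M) = \<mu>"
    and sq_le: "\<And>i. (\<integral>\<omega>. (v i \<omega>)\<^sup>2 \<partial>M) \<le> C"
    and uncorr: "\<And>i j. i + m < j \<Longrightarrow> (\<integral>\<omega>. v i \<omega> * v j \<omega> \<partial>M) = \<mu>\<^sup>2"
    and "0 < \<epsilon>"
  shows "AE \<omega> in M. eventually (\<lambda>n. (\<Sum>i<n. v i \<omega>) \<le> real n * (\<mu> + \<epsilon>)) sequentially"
proof -
  have "0 \<le> \<mu>"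
    using mean[of 0] integral_nonneg_AE[of "v 0" M] nonneg by simp
  have "AE \<omega> in M. eventually (\<lambda>k. \<bar>\<Sum>i<(Suc k)\<^sup>2. v i \<omega> - \<mu>\<bar> < real ((Suc k)\<^sup>2) * (\<epsilon> / 2)) sequentially"
    by (rule AE_eventually_abs_centered_sum_at_squares_less[where m = m and C = C]) (use assms in auto)
  then show ?thesis
  proof eventually_elim
    case (elim \<omega>)
    have "eventually (\<lambda>k. (\<Sum>i<(Suc k)\<^sup>2. v i \<omega>) \<le> real ((Suc k)\<^sup>2) * (\<mu> + \<epsilon> / 2)) sequentially"
      using elim
    proof (rule eventually_mono)
      fix k assume "\<bar>\<Sum>i<(Suc k)\<^sup>2. v i \<omega> - \<mu>\<bar> < real ((Suc k)\<^sup>2) * (\<epsilon> / 2)"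
      moreover have "(\<Sum>i<(Suc k)\<^sup>2. v i \<omega> - \<mu>) = (\<Sum>i<(Suc k)\<^sup>2. v i \<omega>) - real ((Suc k)\<^sup>2) * \<mu>"
        by (simp add: sum_subtractf)
      ultimately show "(\<Sum>i<(Suc k)\<^sup>2. v i \<omega>) \<le> real ((Suc k)\<^sup>2) * (\<mu> + \<epsilon> / 2)"
        unfolding distrib_left by linarith
    qed
    then show ?case
      using \<open>0 \<le> \<mu>\<close> \<open>0 < \<epsilon>\<close> nonneg
      by (intro eventually_sum_le_of_eventually_sum_at_squares_le[where a = "\<mu> + \<epsilon> / 2"]) auto
  qed
qed

section \<open>Sliding windows of an i.i.d. sequence\<close>

locale iid_seq = prob_space M for M :: "'a measure" +
  fixes Z :: "int \<Rightarrow> 'a \<Rightarrow> real"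
  assumes indep: "indep_vars (\<lambda>_. borel) Z UNIV"
    and ident: "\<And>t. distr M borel (Z t) = distr M borel (Z 0)"
begin

lemma Z_measurable [measurable]: "Z t \<in> borel_measurable M"
  using indep unfolding indep_vars_def by auto

lemma integrable_Z_shift:
  fixes h :: "real \<Rightarrow> real"
  assumes [measurable]: "h \<in> borel_measurable borel"
  shows "integrable M (\<lambda>\<omega>. h (Z t \<omega>)) \<longleftrightarrow> integrable M (\<lambda>\<omega>. h (Z 0 \<omega>))"
  using integrable_distr_eq[OF Z_measurable assms, of t] integrable_distr_eq[OF Z_measurable assms, of 0]
  by (simp add: ident[of t])

lemma integral_Z_shift:
  fixes h :: "real \<Rightarrow> real"
  assumes [measurable]: "h \<in> borel_measurable borel"
  shows "(\<integral>\<omega>. h (Z t \<omega>) \<partial>M) = (\<integral>\<omega>. h (Z 0 \<omega>) \<partial>M)"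
  using integral_distr[OF Z_measurable assms, of t] integral_distr[OF Z_measurable assms, of 0]
  by (simp add: ident[of t])

definition window :: "nat \<Rightarrow> int \<Rightarrow> 'a \<Rightarrow> nat \<Rightarrow> real" where
  "window m i \<omega> = (\<lambda>k\<in>{..m}. Z (i - int k) \<omega>)"

lemma window_apply: "k \<le> m \<Longrightarrow> window m i \<omega> k = Z (i - int k) \<omega>"
  by (simp add: window_def)

lemma window_measurable [measurable]: "window m i \<in> M \<rightarrow>\<^sub>M PiM {..m} (\<lambda>_. borel)"
  unfolding window_def by measurable

lemma distr_window: "distr M (PiM {..m} (\<lambda>_. borel)) (window m i) = PiM {..m} (\<lambda>_. distr M borel (Z 0))"
proof -
  let ?P = "PiM (UNIV :: int set) (\<lambda>_. borel :: real measure)"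
  let ?X = "\<lambda>\<omega>. \<lambda>j\<in>UNIV. Z j \<omega>"
  let ?g = "\<lambda>x. \<lambda>k\<in>{..m}. x (i - int k)"
  have [measurable]: "?X \<in> M \<rightarrow>\<^sub>M ?P" "?g \<in> ?P \<rightarrow>\<^sub>M PiM {..m} (\<lambda>_. borel)"
    by measurable
  have "distr M (PiM {..m} (\<lambda>_. borel)) (window m i) = distr (distr M ?P ?X) (PiM {..m} (\<lambda>_. borel)) ?g"
    by (subst distr_distr) (auto simp: window_def comp_def intro!: distr_cong)
  also have "distr M ?P ?X = PiM UNIV (\<lambda>j. distr M borel (Z j))"
    using indep indep_vars_iff_distr_eq_PiM[where I = UNIV and M' = "\<lambda>_. borel" and X = Z] by simp
  also have "distr \<dots> (PiM {..m} (\<lambda>_. borel)) ?g = distr \<dots> (PiM {..m} (\<lambda>k. distr M borel (Z (i - int k)))) ?g"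
    by (intro distr_cong sets_PiM_cong) auto
  also have "\<dots> = PiM {..m} (\<lambda>k. distr M borel (Z (i - int k)))"
    by (rule distr_PiM_reindex) (auto simp: inj_on_def prob_space_distr)
  also have "\<dots> = PiM {..m} (\<lambda>_. distr M borel (Z 0))"
    by (intro PiM_cong refl ident)
  finally show ?thesis .
qed

lemma integral_window_shift:
  fixes F :: "(nat \<Rightarrow> real) \<Rightarrow> real"
  assumes [measurable]: "F \<in> borel_measurable (PiM {..m} (\<lambda>_. borel))"
  shows "(\<integral>\<omega>. F (window m i \<omega>) \<partial>M) = (\<integral>\<omega>. F (window m 0 \<omega>) \<partial>M)"
  using integral_distr[OF window_measurable[of m i] assms] integral_distr[OF window_measurable[of m 0] assms]
  by (simp add: distr_window)

lemma integrable_window_shift: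
  fixes F :: "(nat \<Rightarrow> real) \<Rightarrow> real"
  assumes [measurable]: "F \<in> borel_measurable (PiM {..m} (\<lambda>_. borel))"
  shows "integrable M (\<lambda>\<omega>. F (window m i \<omega>)) \<longleftrightarrow> integrable M (\<lambda>\<omega>. F (window m 0 \<omega>))"
  using integrable_distr_eq[OF window_measurable[of m i] assms]
    integrable_distr_eq[OF window_measurable[of m 0] assms]
  by (simp add: distr_window)

lemma indep_var_window:
  fixes F :: "(nat \<Rightarrow> real) \<Rightarrow> real"
  assumes [measurable]: "F \<in> borel_measurable (PiM {..m} (\<lambda>_. borel))"
    and "i + int m < j"
  shows "indep_var borel (\<lambda>\<omega>. F (window m i \<omega>)) borel (\<lambda>\<omega>. F (window m j \<omega>))"
proof -
  let ?Z = "\<lambda>I \<omega>. restrict (\<lambda>t. Z t \<omega>) I"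
  let ?F = "\<lambda>i x. F (\<lambda>k\<in>{..m}. x (i - int k))"
  have "{i - int m..i} \<inter> {j - int m..j} = {}"
    using assms(2) by auto
  then have indep_blocks: "indep_var (PiM {i - int m..i} (\<lambda>_. borel)) (?Z {i - int m..i})
      (PiM {j - int m..j} (\<lambda>_. borel)) (?Z {j - int m..j})"
    by (intro indep_var_restrict[OF indep]) auto
  have F_measurable: "?F l \<in> borel_measurable (PiM {l - int m..l} (\<lambda>_. borel))" for l
  proof -
    have "(\<lambda>x. \<lambda>k\<in>{..m}. x (l - int k)) \<in> PiM {l - int m..l} (\<lambda>_. borel) \<rightarrow>\<^sub>M PiM {..m} (\<lambda>_. borel)"
      by (intro measurable_restrict measurable_component_singleton) auto
    then show ?thesis
      by (rule measurable_compose) (rule assms(1))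
  qed
  have "indep_var borel (?F i \<circ> ?Z {i - int m..i}) borel (?F j \<circ> ?Z {j - int m..j})"
    by (rule indep_var_compose[OF indep_blocks F_measurable F_measurable])
  moreover have "?F l \<circ> ?Z {l - int m..l} = (\<lambda>\<omega>. F (window m l \<omega>))" for l
    unfolding window_def comp_def by (intro ext arg_cong[where f = F] restrict_ext) auto
  ultimately show ?thesis
    by simp
qed

lemma integral_mult_window_eq:
  fixes F :: "(nat \<Rightarrow> real) \<Rightarrow> real"
  assumes [measurable]: "F \<in> borel_measurable (PiM {..m} (\<lambda>_. borel))"
    and int: "integrable M (\<lambda>\<omega>. F (window m 0 \<omega>))" and "i + int m < j"
  shows "(\<integral>\<omega>. F (window m i \<omega>) * F (window m j \<omega>) \<partial>M) = (\<integral>\<omega>. F (window m 0 \<omega>) \<partial>M)\<^sup>2"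
proof -
  have "integrable M (\<lambda>\<omega>. F (window m l \<omega>))" for l
    using int by (subst integrable_window_shift) simp_all
  then show ?thesis
    using indep_var_lebesgue_integral[OF indep_var_window[OF assms(1,3)]]
      integral_window_shift[of F m i] integral_window_shift[of F m j]
    by (simp add: power2_eq_square)
qed

lemma AE_eventually_sum_window_le:
  fixes F :: "(nat \<Rightarrow> real) \<Rightarrow> real" and b \<epsilon> :: real
  assumes [measurable]: "F \<in> borel_measurable (PiM {..m} (\<lambda>_. borel))"
    and lower: "\<And>x. b \<le> F x"
    and sq: "integrable M (\<lambda>\<omega>. (F (window m 0 \<omega>))\<^sup>2)"
    and "0 < \<epsilon>"
  shows "AE \<omega> in M. eventually (\<lambda>n.
    (\<Sum>i<n. F (window m (int i) \<omega>)) \<le> real n * ((\<integral>\<omega>. F (window m 0 \<omega>) \<partial>M) + \<epsilon>)) sequentially"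
proof -
  define G where "G x = F x - b" for x
  have [measurable]: "G \<in> borel_measurable (PiM {..m} (\<lambda>_. borel))"
    unfolding G_def by measurable
  have int_F: "integrable M (\<lambda>\<omega>. F (window m 0 \<omega>))"
    by (rule square_integrable_imp_integrable[OF _ sq]) measurable
  have sq_G: "integrable M (\<lambda>\<omega>. (G (window m i \<omega>))\<^sup>2)" for i
  proof -
    have "integrable M (\<lambda>\<omega>. (G (window m 0 \<omega>))\<^sup>2)"
      using int_F sq by (simp add: G_def power2_diff)
    then show ?thesis
      by (subst integrable_window_shift[where F = "\<lambda>x. (G x)\<^sup>2"]) simp_all
  qed
  have mean_G: "(\<integral>\<omega>. G (window m 0 \<omega>) \<partial>M) = (\<integral>\<omega>. F (window m 0 \<omega>) \<partial>M) - b"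
    using int_F prob_space by (simp add: G_def)
  have "AE \<omega> in M. eventually (\<lambda>n. (\<Sum>i<n. G (window m (int i) \<omega>))
      \<le> real n * ((\<integral>\<omega>. G (window m 0 \<omega>) \<partial>M) + \<epsilon>)) sequentially"
  proof (rule AE_eventually_sum_le_of_uncorrelated_beyond[where m = m])
    show "(\<integral>\<omega>. G (window m (int i) \<omega>) \<partial>M) = (\<integral>\<omega>. G (window m 0 \<omega>) \<partial>M)" for i
      by (rule integral_window_shift) simp
    show "(\<integral>\<omega>. (G (window m (int i) \<omega>))\<^sup>2 \<partial>M) \<le> (\<integral>\<omega>. (G (window m 0 \<omega>))\<^sup>2 \<partial>M)" for i
      using integral_window_shift[of "\<lambda>x. (G x)\<^sup>2" m "int i"] by simp
    show "(\<integral>\<omega>. G (window m (int i) \<omega>) * G (window m (int j) \<omega>) \<partial>M) = (\<integral>\<omega>. G (window m 0 \<omega>) \<partial>M)\<^sup>2"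
      if "i + m < j" for i j
      using that square_integrable_imp_integrable[OF _ sq_G] by (intro integral_mult_window_eq) auto
  qed (use lower sq_G \<open>0 < \<epsilon>\<close> in \<open>auto simp: G_def\<close>)
  then show ?thesis
    unfolding mean_G by (simp add: G_def sum_subtractf algebra_simps)
qed

end

lemma exp_diff_le_exp_mult_diff:
  fixes x y :: real
  assumes "x \<le> y"
  shows "exp y - exp x \<le> exp y * (y - x)"
proof -
  have "exp y - exp x = exp y * (1 - exp (- (y - x)))"
    by (simp add: algebra_simps flip: exp_add)
  also have "\<dots> \<le> exp y * (y - x)"
  proof (rule mult_left_mono)
    show "1 - exp (- (y - x)) \<le> y - x"
      using exp_ge_add_one_self[of "- (y - x)"] by linarith
  qed simp
  finally show ?thesis .
qed

lemma abs_exp_diff_le: "\<bar>exp x - exp y\<bar> \<le> exp (max x y) * \<bar>x - y\<bar>" for x y :: real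
  using exp_diff_le_exp_mult_diff[of x y] exp_diff_le_exp_mult_diff[of y x]
  by (cases "x \<le> y") (auto simp: max_def)

lemma abs_diff_linear_plus_exp_le:
  fixes \<beta> C a x y :: real
  assumes "0 \<le> \<beta>" "0 \<le> C" "a \<le> x" "a \<le> y"
  shows "\<bar>(\<beta> * x + C * exp (- x / 2)) - (\<beta> * y + C * exp (- y / 2))\<bar>
    \<le> max \<beta> (C * exp (- a / 2) / 2 - \<beta>) * \<bar>x - y\<bar>"
proof -
  have le: "\<bar>(\<beta> * x + C * exp (- x / 2)) - (\<beta> * y + C * exp (- y / 2))\<bar>
      \<le> max \<beta> (C * exp (- a / 2) / 2 - \<beta>) * (y - x)" if "a \<le> x" "x \<le> y" for x y
  proof -
    define d where "d = exp (- x / 2) - exp (- y / 2)"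
    have "0 \<le> d"
      using that by (simp add: d_def)
    have "d \<le> exp (- x / 2) * (- x / 2 - - y / 2)"
      unfolding d_def by (rule exp_diff_le_exp_mult_diff) (use that in simp)
    also have "\<dots> = exp (- x / 2) * ((y - x) / 2)"
      by (simp add: field_simps)
    also have "\<dots> \<le> exp (- a / 2) * ((y - x) / 2)"
      using that by (intro mult_right_mono) auto
    finally have "C * d \<le> C * exp (- a / 2) / 2 * (y - x)"
      using mult_left_mono[OF _ \<open>0 \<le> C\<close>] by fastforce
    moreover have "(\<beta> * x + C * exp (- x / 2)) - (\<beta> * y + C * exp (- y / 2)) = C * d - \<beta> * (y - x)"
      by (simp add: d_def algebra_simps)
    moreover have "0 \<le> C * d"
      using \<open>0 \<le> C\<close> \<open>0 \<le> d\<close> by simp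
    moreover have "\<beta> * (y - x) \<le> max \<beta> (C * exp (- a / 2) / 2 - \<beta>) * (y - x)"
      "(C * exp (- a / 2) / 2 - \<beta>) * (y - x) \<le> max \<beta> (C * exp (- a / 2) / 2 - \<beta>) * (y - x)"
      using that by (intro mult_right_mono; simp)+
    ultimately show ?thesis
      by (simp add: abs_le_iff left_diff_distrib)
  qed
  show ?thesis
    using le[of x y] le[of y x] assms
    by (cases "x \<le> y") (auto simp: abs_minus_commute)
qed

lemma sum_le_of_linear_recurrence:
  fixes R u :: "nat \<Rightarrow> real" and \<beta> :: real
  assumes "\<And>i. 0 \<le> R i" "\<And>i. R (Suc i) = u i + \<beta> * R i" "\<beta> < 1"
  shows "(\<Sum>i<n. R i) \<le> (R 0 + (\<Sum>i<n. u i)) / (1 - \<beta>)"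
proof -
  have "(\<Sum>i<n. R i) + R n - R 0 = (\<Sum>i<n. R (Suc i))"
    by (induction n) auto
  also have "\<dots> = (\<Sum>i<n. u i) + \<beta> * (\<Sum>i<n. R i)"
    using assms(2) by (simp add: sum.distrib sum_distrib_left)
  finally have "(1 - \<beta>) * (\<Sum>i<n. R i) \<le> R 0 + (\<Sum>i<n. u i)"
    using assms(1)[of n] by (simp add: algebra_simps)
  then show ?thesis
    using assms(3) by (simp add: field_simps)
qed

lemma linear_recurrence_le_linear:
  fixes S u :: "nat \<Rightarrow> real" and \<beta> c K :: real
  assumes rec: "\<And>t. S (Suc t) = u t + \<beta> * S t" and u_le: "\<And>t. u t \<le> K + c * t"
    and "0 \<le> \<beta>" "\<beta> < 1" "0 \<le> c" "0 \<le> K" "0 \<le> S 0"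
  shows "S t \<le> S 0 + (K + c * t) / (1 - \<beta>)"
proof (induction t)
  case 0
  then show ?case
    using assms by simp
next
  case (Suc t)
  have "\<beta> * S t \<le> \<beta> * S 0 + \<beta> * ((K + c * t) / (1 - \<beta>))"
    using mult_left_mono[OF Suc \<open>0 \<le> \<beta>\<close>] by (simp add: distrib_left)
  moreover have "\<beta> * S 0 \<le> S 0"
    using assms by (simp add: mult_left_le_one_le)
  moreover have "(K + c * t) + \<beta> * ((K + c * t) / (1 - \<beta>)) = (K + c * t) / (1 - \<beta>)"
    using \<open>\<beta> < 1\<close> by (simp add: field_simps)
  moreover have "(K + c * t) / (1 - \<beta>) \<le> (K + c * Suc t) / (1 - \<beta>)"
    using assms by (intro divide_right_mono add_left_mono mult_left_mono) auto
  ultimately show ?case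
    using rec[of t] u_le[of t] by linarith
qed

lemma eventually_le_linear_imp_le_linear:
  fixes f :: "nat \<Rightarrow> real" and c :: real
  assumes "eventually (\<lambda>t. f t \<le> c * (t + 1)) sequentially" "0 \<le> c"
  obtains K where "0 \<le> K" "\<And>t. f t \<le> K + c * t"
proof -
  obtain N where N: "\<And>t. N \<le> t \<Longrightarrow> f t \<le> c * (t + 1)"
    using assms(1) by (auto simp: eventually_sequentially)
  define K where "K = c + (\<Sum>t<N. \<bar>f t\<bar>)"
  have "f t \<le> K + c * t" for t
  proof (cases "N \<le> t")
    case True
    then show ?thesis
      using N[OF True] by (simp add: K_def algebra_simps) (use sum_abs_ge_zero[of f "{..<N}"] in linarith)
  next
    case False
    then have "f t \<le> (\<Sum>t<N. \<bar>f t\<bar>)"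
      using member_le_sum[of t "{..<N}" "\<lambda>t. \<bar>f t\<bar>"] by auto
    moreover have "0 \<le> c * t"
      using \<open>0 \<le> c\<close> by simp
    ultimately show ?thesis
      using \<open>0 \<le> c\<close> unfolding K_def by linarith
  qed
  moreover have "0 \<le> K"
    using \<open>0 \<le> c\<close> by (simp add: K_def sum_nonneg)
  ultimately show ?thesis
    using that by blast
qed

lemma tendsto_geometric_mult_abs_exp_diff:
  fixes x y :: "nat \<Rightarrow> real" and B H c \<kappa> \<theta> :: real
  assumes close: "eventually (\<lambda>t. \<bar>x t - y t\<bar> \<le> B * exp (- \<theta> * t)) sequentially"
    and y_le: "\<And>t. y t \<le> H + c * t"
    and "0 < \<theta>" "\<kappa> + c < \<theta>"
  shows "(\<lambda>t. exp \<kappa> ^ t * \<bar>exp (x t) - exp (y t)\<bar>) \<longlonglongrightarrow> 0"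
proof -
  define q where "q = exp (\<kappa> + c - \<theta>)"
  have lim: "(\<lambda>t. B * exp (H + B) * q ^ t) \<longlonglongrightarrow> 0"
    using \<open>\<kappa> + c < \<theta>\<close> by (intro tendsto_mult_right_zero LIMSEQ_power_zero) (simp add: q_def)
  have bound: "eventually (\<lambda>t. exp \<kappa> ^ t * \<bar>exp (x t) - exp (y t)\<bar> \<le> B * exp (H + B) * q ^ t) sequentially"
    using close
  proof eventually_elim
    case (elim t)
    have "0 \<le> B * exp (- \<theta> * t)"
      by (rule order_trans[OF abs_ge_zero elim])
    then have "0 \<le> B"
      by (simp add: zero_le_mult_iff)
    have "exp (- \<theta> * t) \<le> 1"
      using \<open>0 < \<theta>\<close> by simp
    from mult_left_mono[OF this \<open>0 \<le> B\<close>] have "B * exp (- \<theta> * t) \<le> B"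
      by simp
    then have "max (x t) (y t) \<le> H + c * t + B"
      using elim y_le[of t] by (auto simp: abs_le_iff)
    then have "exp (max (x t) (y t)) * \<bar>x t - y t\<bar> \<le> exp (H + c * t + B) * (B * exp (- \<theta> * t))"
      using elim by (intro mult_mono) auto
    then have "\<bar>exp (x t) - exp (y t)\<bar> \<le> exp (H + c * t + B) * (B * exp (- \<theta> * t))"
      using abs_exp_diff_le[of "x t" "y t"] by linarith
    then have "exp (t * \<kappa>) * \<bar>exp (x t) - exp (y t)\<bar>
        \<le> exp (t * \<kappa>) * (exp (H + c * t + B) * (B * exp (- \<theta> * t)))"
      by (rule mult_left_mono) simp
    also have "\<dots> = B * exp (t * \<kappa> + (H + c * t + B) + - \<theta> * t)"
      by (simp only: exp_add ac_simps)
    also have "t * \<kappa> + (H + c * t + B) + - \<theta> * t = (H + B) + t * (\<kappa> + c - \<theta>)"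
      by (simp add: algebra_simps)
    also have "B * exp ((H + B) + t * (\<kappa> + c - \<theta>)) = B * exp (H + B) * q ^ t"
      by (simp only: q_def exp_add exp_of_nat_mult mult.assoc)
    finally show ?case
      by (simp only: exp_of_nat_mult)
  qed
  show ?thesis
    by (rule tendsto_sandwich[OF _ bound tendsto_const lim]) simp
qed

lemma exists_power_mult_less:
  fixes \<beta> K \<epsilon> :: real
  assumes "0 \<le> \<beta>" "\<beta> < 1" "0 < \<epsilon>"
  shows "\<exists>m. \<beta> ^ m * K < \<epsilon>"
proof -
  have "(\<lambda>m. \<beta> ^ m * K) \<longlonglongrightarrow> 0"
    using assms by (intro tendsto_mult_left_zero LIMSEQ_power_zero) simp
  then have "eventually (\<lambda>m. \<beta> ^ m * K < \<epsilon>) sequentially"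
    using assms(3) by (rule order_tendstoD(2))
  then show ?thesis
    using eventually_happens'[OF sequentially_bot] by blast
qed

lemma max_minus_mult_le_mult_square:
  fixes \<beta> A E :: real
  assumes "0 \<le> \<beta>" "1 \<le> E"
  shows "max \<beta> (A * E - \<beta>) \<le> max \<beta> (A - \<beta>) * E\<^sup>2"
proof -
  define K where "K = max \<beta> (A - \<beta>)"
  have "\<beta> \<le> K" "A - \<beta> \<le> K" "0 \<le> K"
    using assms by (auto simp: K_def)
  have "K \<le> K * E\<^sup>2"
    using \<open>0 \<le> K\<close> assms(2) by (simp add: mult_le_cancel_left1)
  moreover have "A * E - \<beta> = E * (A - \<beta>) + \<beta> * (E - 1)"
    by (simp add: algebra_simps)
  moreover have "E * (A - \<beta>) + \<beta> * (E - 1) \<le> E * K + K * (E - 1)"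
    using assms \<open>\<beta> \<le> K\<close> \<open>A - \<beta> \<le> K\<close> by (intro add_mono mult_left_mono mult_right_mono) auto
  moreover have "E * K + K * (E - 1) \<le> K * E\<^sup>2"
    using \<open>0 \<le> K\<close> mult_nonneg_nonneg[OF \<open>0 \<le> K\<close> zero_le_power2[of "E - 1"]]
    by (simp add: power2_eq_square algebra_simps)
  ultimately show ?thesis
    using \<open>\<beta> \<le> K\<close> by (simp add: K_def)
qed

section \<open>Logarithms truncated from below\<close>

definition ln_trunc :: "real \<Rightarrow> real \<Rightarrow> real" where
  "ln_trunc L y = ln (max y (exp (- L)))"

lemma ln_trunc_measurable [measurable]: "ln_trunc L \<in> borel_measurable borel"
  unfolding ln_trunc_def by measurable

lemma ln_trunc_ge: "- L \<le> ln_trunc L y"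
  unfolding ln_trunc_def by (subst ln_ge_iff) (auto intro: max.strict_coboundedI2)

lemma ln_trunc_mono: "y \<le> y' \<Longrightarrow> ln_trunc L y \<le> ln_trunc L y'"
  unfolding ln_trunc_def by (subst ln_le_cancel_iff) (auto intro: max.strict_coboundedI2 max.mono)

lemma le_exp_ln_trunc: "y \<le> exp (ln_trunc L y)"
  unfolding ln_trunc_def by (subst exp_ln) (auto intro: max.strict_coboundedI2)

lemma ln_trunc_le_of_le_exp:
  assumes "0 \<le> L" "0 \<le> r" "y \<le> exp r"
  shows "ln_trunc L y \<le> r"
proof -
  have "max y (exp (- L)) \<le> exp r"
    using assms by simp
  then have "ln (max y (exp (- L))) \<le> ln (exp r)"
    by (subst ln_le_cancel_iff) (auto intro: max.strict_coboundedI2)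
  then show ?thesis
    by (simp add: ln_trunc_def)
qed

lemma ln_trunc_le_add:
  assumes "y' \<le> max y (exp (- L)) * exp R" "0 \<le> R"
  shows "ln_trunc L y' \<le> ln_trunc L y + R"
proof -
  have pos: "0 < max y (exp (- L))"
    by (auto intro: max.strict_coboundedI2)
  have "max y' (exp (- L)) \<le> max y (exp (- L)) * exp R"
    using assms pos by (auto intro: order_trans[OF _ mult_left_mono[of 1]])
  then have "ln (max y' (exp (- L))) \<le> ln (max y (exp (- L)) * exp R)"
    using pos by (subst ln_le_cancel_iff) (auto intro: max.strict_coboundedI2)
  then show ?thesis
    using pos by (simp add: ln_trunc_def ln_mult)
qed

lemma ln_trunc_eq_pos_part_minus_cut:
  assumes "0 \<le> L"
  shows "ln_trunc L y = (if y > 0 then max 0 (ln y) else 0) - (if y > 0 then min (max 0 (- ln y)) L else L)"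
proof (cases "y > 0")
  case True
  define u where "u = ln y"
  have y: "y = exp u"
    using True by (simp add: u_def)
  have "ln_trunc L y = max u (- L)"
    unfolding y by (simp add: ln_trunc_def max_def)
  then show ?thesis
    unfolding y using assms by (auto simp: max_def min_def)
next
  case False
  then have "max y (exp (- L)) = exp (- L)"
    by (metis exp_gt_zero max.absorb2 less_le_not_le not_less order.trans)
  then show ?thesis
    using False by (simp add: ln_trunc_def)
qed

lemma nn_integral_eq_SUP_min_of_nat:
  assumes [measurable]: "f \<in> borel_measurable M"
  shows "(\<integral>\<^sup>+x. f x \<partial>M) = (SUP n. \<integral>\<^sup>+x. min (f x) (of_nat n) \<partial>M)"
proof -
  have "(\<integral>\<^sup>+x. f x \<partial>M) = (\<integral>\<^sup>+x. (SUP n. min (f x) (of_nat n)) \<partial>M)"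
    by (simp add: inf_min[symmetric] inf_SUP[symmetric] ennreal_SUP_of_nat_eq_top)
  also have "\<dots> = (SUP n. \<integral>\<^sup>+x. min (f x) (of_nat n) \<partial>M)"
    by (rule nn_integral_monotone_convergence_SUP)
      (auto simp: incseq_def le_fun_def intro: min.coboundedI2)
  finally show ?thesis .
qed

text \<open>The hypothesis \<open>expect_log_neg\<close> forces the positive part of \<open>ln Y\<close> to be integrable;
  cutting the negative part at a large level \<open>L\<close> keeps the expectation negative.\<close>
lemma (in prob_space) expect_log_neg_imp_integral_ln_trunc_neg:
  fixes Y :: "'a \<Rightarrow> real"
  assumes [measurable]: "Y \<in> borel_measurable M" and "expect_log_neg M Y"
  obtains L where "0 \<le> L" "integrable M (\<lambda>\<omega>. ln_trunc L (Y \<omega>))"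
    "(\<integral>\<omega>. ln_trunc L (Y \<omega>) \<partial>M) < 0"
proof -
  define pos where "pos \<omega> = (if Y \<omega> > 0 then max 0 (ln (Y \<omega>)) else 0)" for \<omega>
  define neg where "neg \<omega> = (if Y \<omega> > 0 then ennreal (max 0 (- ln (Y \<omega>))) else \<infinity>)" for \<omega>
  have [measurable]: "pos \<in> borel_measurable M" "neg \<in> borel_measurable M"
    unfolding pos_def neg_def by measurable
  have pos_nonneg: "0 \<le> pos \<omega>" for \<omega>
    by (simp add: pos_def)
  have "(\<integral>\<^sup>+\<omega>. ennreal (pos \<omega>) \<partial>M) < (\<integral>\<^sup>+\<omega>. neg \<omega> \<partial>M)"
    using assms(2) unfolding expect_log_neg_def pos_def neg_def
    by (simp add: if_distrib[of ennreal] cong: if_cong)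
  then obtain n where n: "(\<integral>\<^sup>+\<omega>. ennreal (pos \<omega>) \<partial>M) < (\<integral>\<^sup>+\<omega>. min (neg \<omega>) (of_nat n) \<partial>M)"
    by (auto simp: nn_integral_eq_SUP_min_of_nat[of neg] less_SUP_iff)
  define L where "L = real n"
  define cut where "cut \<omega> = (if Y \<omega> > 0 then min (max 0 (- ln (Y \<omega>))) L else L)" for \<omega>
  have [measurable]: "cut \<in> borel_measurable M"
    unfolding cut_def by measurable
  have cut_bounds: "0 \<le> cut \<omega>" "cut \<omega> \<le> L" for \<omega>
    by (auto simp: cut_def L_def)
  have min_neg: "min (neg \<omega>) (of_nat n) = ennreal (cut \<omega>)" for \<omega>
    by (auto simp: neg_def cut_def L_def min_def top_unique ennreal_of_nat_eq_real_of_nat)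
  have int_cut: "integrable M cut"
    by (rule integrable_const_bound[where B = L]) (use cut_bounds in auto)
  note nn_cut = nn_integral_eq_integral[OF int_cut]
  have "(\<integral>\<^sup>+\<omega>. ennreal (pos \<omega>) \<partial>M) < \<infinity>"
    using n nn_cut cut_bounds by (simp add: min_neg) (meson ennreal_less_top order.strict_trans)
  then have int_pos: "integrable M pos"
    using pos_nonneg by (intro integrableI_nonneg) auto
  have ln_trunc_eq: "ln_trunc L (Y \<omega>) = pos \<omega> - cut \<omega>" for \<omega>
    unfolding pos_def cut_def by (rule ln_trunc_eq_pos_part_minus_cut) (simp add: L_def)
  have "ennreal (\<integral>\<omega>. pos \<omega> \<partial>M) < ennreal (\<integral>\<omega>. cut \<omega> \<partial>M)"
    using n nn_integral_eq_integral[OF int_pos] nn_cut cut_bounds pos_nonneg by (simp add: min_neg)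
  then have "(\<integral>\<omega>. pos \<omega> \<partial>M) < (\<integral>\<omega>. cut \<omega> \<partial>M)"
    by (meson ennreal_leI not_le)
  then show ?thesis
    using that[of L] int_pos int_cut unfolding ln_trunc_eq by (simp add: L_def)
qed

section \<open>Invertibility of EGARCH\<close>

locale egarch = iid_seq M Z for M :: "'a measure" and Z :: "int \<Rightarrow> 'a \<Rightarrow> real" +
  fixes \<alpha> \<beta> \<gamma> \<delta> :: real
  assumes beta_nonneg: "0 \<le> \<beta>" and beta_less_one: "\<beta> < 1" and abs_gamma_le_delta: "\<bar>\<gamma>\<bar> \<le> \<delta>"
    and square_integrable_Z: "integrable M (\<lambda>\<omega>. (Z 0 \<omega>)\<^sup>2)"
begin

abbreviation logsig :: "int \<Rightarrow> 'a \<Rightarrow> real" where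
  "logsig \<equiv> egarch_logsig \<alpha> \<beta> \<gamma> \<delta> Z"

abbreviation loghat :: "real \<Rightarrow> nat \<Rightarrow> 'a \<Rightarrow> real" where
  "loghat \<equiv> egarch_loghat \<alpha> \<beta> \<gamma> \<delta> Z"

text \<open>\<open>news\<close> is the news impact function \<open>g\<close>, \<open>S t\<close> is \<open>log \<sigma>\<^sub>t\<^sup>2 - \<alpha> / (1 - \<beta>)\<close>, \<open>rate t\<close> is
  \<open>\<Lambda>\<^sub>t\<close>, and \<open>window_rate m\<close> is \<open>\<Lambda>\<^sub>t\<close> with \<open>S t\<close> cut after \<open>m\<close> terms, as a function of the
  window \<open>(Z\<^sub>t, \<dots>, Z\<^sub>t\<^sub>-\<^sub>m)\<close>.\<close>

definition news :: "real \<Rightarrow> real" where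
  "news z = \<gamma> * z + \<delta> * \<bar>z\<bar>"

definition shock :: "int \<Rightarrow> 'a \<Rightarrow> real" where
  "shock t \<omega> = news (Z t \<omega>)"

definition S :: "int \<Rightarrow> 'a \<Rightarrow> real" where
  "S t \<omega> = (\<Sum>k. \<beta> ^ k * shock (t - 1 - int k) \<omega>)"

definition S_summable :: "'a \<Rightarrow> bool" where
  "S_summable \<omega> \<longleftrightarrow> (\<forall>t. summable (\<lambda>k. \<beta> ^ k * shock (t - 1 - int k) \<omega>))"

definition rate :: "int \<Rightarrow> 'a \<Rightarrow> real" where
  "rate t \<omega> = max \<beta> (1 / 2 * exp (1 / 2 * S t \<omega>) * shock t \<omega> - \<beta>)"

definition window_rate :: "nat \<Rightarrow> (nat \<Rightarrow> real) \<Rightarrow> real" where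
  "window_rate m x = max \<beta> (1 / 2 * exp (1 / 2 * (\<Sum>k<m. \<beta> ^ k * news (x (Suc k)))) * news (x 0) - \<beta>)"

lemma news_measurable [measurable]: "news \<in> borel_measurable borel"
  unfolding news_def by measurable

lemma shock_measurable [measurable]: "shock t \<in> borel_measurable M"
  unfolding shock_def by measurable

lemma news_nonneg: "0 \<le> news z"
proof -
  have "- (\<gamma> * z) \<le> \<delta> * \<bar>z\<bar>"
    using abs_gamma_le_delta abs_ge_minus_self[of "\<gamma> * z"] mult_right_mono[of "\<bar>\<gamma>\<bar>" \<delta> "\<bar>z\<bar>"]
    by (simp add: abs_mult)
  then show ?thesis
    by (simp add: news_def)
qed

lemma shock_nonneg: "0 \<le> shock t \<omega>"
  by (simp add: shock_def news_nonneg)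

lemma news_le: "news z \<le> (\<bar>\<gamma>\<bar> + \<delta>) * \<bar>z\<bar>"
  using abs_ge_self[of "\<gamma> * z"] by (simp add: news_def abs_mult algebra_simps)

lemma news_mult: "0 \<le> c \<Longrightarrow> news (c * z) = c * news z"
  by (simp add: news_def abs_mult algebra_simps)

lemma square_integrable_shock: "integrable M (\<lambda>\<omega>. (shock t \<omega>)\<^sup>2)"
proof (rule Bochner_Integration.integrable_bound)
  show "integrable M (\<lambda>\<omega>. (\<bar>\<gamma>\<bar> + \<delta>)\<^sup>2 * (Z t \<omega>)\<^sup>2)"
    using square_integrable_Z integrable_Z_shift[of "\<lambda>z. z\<^sup>2" t] by simp
  show "AE \<omega> in M. norm ((shock t \<omega>)\<^sup>2) \<le> norm ((\<bar>\<gamma>\<bar> + \<delta>)\<^sup>2 * (Z t \<omega>)\<^sup>2)"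
  proof (intro AE_I2)
    fix \<omega>
    have "(shock t \<omega>)\<^sup>2 \<le> ((\<bar>\<gamma>\<bar> + \<delta>) * \<bar>Z t \<omega>\<bar>)\<^sup>2"
      using news_le shock_nonneg by (intro power_mono) (auto simp: shock_def)
    then show "norm ((shock t \<omega>)\<^sup>2) \<le> norm ((\<bar>\<gamma>\<bar> + \<delta>)\<^sup>2 * (Z t \<omega>)\<^sup>2)"
      by (simp add: power_mult_distrib)
  qed
qed simp

lemma integrable_shock: "integrable M (shock t)"
  by (rule square_integrable_imp_integrable[OF shock_measurable square_integrable_shock])

lemma integral_shock: "(\<integral>\<omega>. shock t \<omega> \<partial>M) = (\<integral>\<omega>. shock 0 \<omega> \<partial>M)"
  unfolding shock_def by (rule integral_Z_shift) simp

lemma integral_shock_square: "(\<integral>\<omega>. (shock t \<omega>)\<^sup>2 \<partial>M) = (\<integral>\<omega>. (shock 0 \<omega>)\<^sup>2 \<partial>M)"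
  unfolding shock_def by (rule integral_Z_shift) simp

lemma AE_S_summable: "AE \<omega> in M. S_summable \<omega>"
  unfolding S_summable_def
proof (subst AE_all_countable, intro allI)
  fix t :: int
  let ?\<mu> = "\<integral>\<omega>. shock 0 \<omega> \<partial>M"
  let ?f = "\<lambda>k \<omega>. ennreal (\<beta> ^ k * shock (t - 1 - int k) \<omega>)"
  have "(\<integral>\<^sup>+\<omega>. ?f k \<omega> \<partial>M) = ennreal (\<beta> ^ k * ?\<mu>)" for k
    using integrable_shock beta_nonneg shock_nonneg
    by (subst nn_integral_eq_integral) (auto simp: integral_shock[of "t - 1 - int k"])
  then have "(\<integral>\<^sup>+\<omega>. (\<Sum>k. ?f k \<omega>) \<partial>M) = (\<Sum>k. ennreal (\<beta> ^ k * ?\<mu>))"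
    by (subst nn_integral_suminf) simp_all
  also have "\<dots> = ennreal (?\<mu> / (1 - \<beta>))"
  proof (rule suminf_ennreal_eq)
    show "0 \<le> \<beta> ^ k * ?\<mu>" for k
      using beta_nonneg shock_nonneg by simp
    show "(\<lambda>k. \<beta> ^ k * ?\<mu>) sums (?\<mu> / (1 - \<beta>))"
      using sums_mult2[OF geometric_sums, of \<beta> ?\<mu>] beta_nonneg beta_less_one by simp
  qed
  finally have "AE \<omega> in M. (\<Sum>k. ?f k \<omega>) \<noteq> \<infinity>"
    by (intro nn_integral_PInf_AE) simp_all
  then show "AE \<omega> in M. summable (\<lambda>k. \<beta> ^ k * shock (t - 1 - int k) \<omega>)"
    by eventually_elim (auto intro: summable_suminf_not_top simp: beta_nonneg shock_nonneg)
qed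

lemma S_nonneg: "S_summable \<omega> \<Longrightarrow> 0 \<le> S t \<omega>"
  unfolding S_def S_summable_def by (intro suminf_nonneg) (auto simp: beta_nonneg shock_nonneg)

lemma S_split:
  assumes "S_summable \<omega>"
  shows "S t \<omega> = (\<Sum>k<m. \<beta> ^ k * shock (t - 1 - int k) \<omega>) + \<beta> ^ m * S (t - int m) \<omega>"
proof -
  have "(\<lambda>n. \<beta> ^ (n + m) * shock (t - 1 - int (n + m)) \<omega>)
      = (\<lambda>n. \<beta> ^ m * (\<beta> ^ n * shock (t - int m - 1 - int n) \<omega>))"
    by (auto simp: power_add algebra_simps)
  then have "(\<Sum>n. \<beta> ^ (n + m) * shock (t - 1 - int (n + m)) \<omega>) = \<beta> ^ m * S (t - int m) \<omega>"
    using assms unfolding S_def S_summable_def by (simp add: suminf_mult)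
  then show ?thesis
    using assms suminf_split_initial_segment[of "\<lambda>k. \<beta> ^ k * shock (t - 1 - int k) \<omega>" m]
    unfolding S_def S_summable_def by simp
qed

lemma S_Suc: "S_summable \<omega> \<Longrightarrow> S (t + 1) \<omega> = shock t \<omega> + \<beta> * S t \<omega>"
  using S_split[of \<omega> "t + 1" 1] by simp

lemma logsig_eq: "logsig t \<omega> = \<alpha> / (1 - \<beta>) + S t \<omega>"
  by (simp add: egarch_logsig_def S_def shock_def news_def)

lemma egarch_inv_arg_eq: "egarch_inv_arg \<beta> \<gamma> \<delta> Z \<omega> = rate 0 \<omega>"
proof -
  have index: "- int k - 1 = 0 - 1 - int k" for k
    by simp
  show ?thesis
    unfolding egarch_inv_arg_def rate_def S_def shock_def news_def index ..
qed

lemma window_rate_measurable [measurable]: "window_rate m \<in> borel_measurable (PiM {..m} (\<lambda>_. borel))"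
proof -
  have news_component: "(\<lambda>x. news (x k)) \<in> borel_measurable (PiM {..m} (\<lambda>_. borel))" if "k \<le> m" for k
    using that by (intro measurable_compose[OF measurable_component_singleton[of k "{..m}"] news_measurable]) auto
  have [measurable]: "(\<lambda>x. \<Sum>k<m. \<beta> ^ k * news (x (Suc k))) \<in> borel_measurable (PiM {..m} (\<lambda>_. borel))"
    using news_component by (intro borel_measurable_sum borel_measurable_times) auto
  show ?thesis
    unfolding window_rate_def using news_component[of 0] by measurable
qed

lemma window_rate_window:
  "window_rate m (window m t \<omega>) =
    max \<beta> (1 / 2 * exp (1 / 2 * (\<Sum>k<m. \<beta> ^ k * shock (t - 1 - int k) \<omega>)) * shock t \<omega> - \<beta>)"
proof -
  have "(\<Sum>k<m. \<beta> ^ k * news (window m t \<omega> (Suc k))) = (\<Sum>k<m. \<beta> ^ k * shock (t - 1 - int k) \<omega>)"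
    by (intro sum.cong) (auto simp: window_apply shock_def algebra_simps)
  then show ?thesis
    by (simp add: window_rate_def window_apply shock_def)
qed

lemma window_rate_le_rate: "S_summable \<omega> \<Longrightarrow> window_rate m (window m t \<omega>) \<le> rate t \<omega>"
  unfolding window_rate_window rate_def
  using S_split[of \<omega> t m] S_nonneg[of \<omega> "t - int m"] beta_nonneg shock_nonneg[of t \<omega>]
  by (intro max.mono mult_right_mono diff_right_mono) auto

lemma ln_trunc_rate_le_window_rate:
  assumes "S_summable \<omega>"
  shows "ln_trunc L (rate t \<omega>) \<le> ln_trunc L (window_rate m (window m t \<omega>)) + \<beta> ^ m * S (t - int m) \<omega>"
proof (rule ln_trunc_le_add)
  define A where "A = 1 / 2 * exp (1 / 2 * (\<Sum>k<m. \<beta> ^ k * shock (t - 1 - int k) \<omega>)) * shock t \<omega>"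
  define R where "R = \<beta> ^ m * S (t - int m) \<omega>"
  show "0 \<le> R"
    using assms beta_nonneg by (simp add: R_def S_nonneg)
  then have "1 \<le> exp (R / 2)"
    by simp
  have "rate t \<omega> = max \<beta> (A * exp (R / 2) - \<beta>)"
    using S_split[OF assms, of t m]
    by (simp add: rate_def A_def R_def exp_add algebra_simps)
  also have "\<dots> \<le> max \<beta> (A - \<beta>) * (exp (R / 2))\<^sup>2"
    using beta_nonneg \<open>1 \<le> exp (R / 2)\<close> by (rule max_minus_mult_le_mult_square)
  also have "\<dots> = max \<beta> (A - \<beta>) * exp R"
    by (simp add: power2_eq_square flip: exp_add)
  also have "\<dots> \<le> max (window_rate m (window m t \<omega>)) (exp (- L)) * exp R"
    by (intro mult_right_mono) (auto simp: window_rate_window A_def)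
  finally show "rate t \<omega> \<le> max (window_rate m (window m t \<omega>)) (exp (- L)) * exp (\<beta> ^ m * S (t - int m) \<omega>)"
    by (simp add: R_def)
qed

lemma window_rate_le_exp: "window_rate m x \<le> exp (\<Sum>k\<le>m. news (x k))"
proof -
  define s where "s = (\<Sum>k<m. \<beta> ^ k * news (x (Suc k)))"
  have "s \<le> (\<Sum>k<m. news (x (Suc k)))"
    unfolding s_def using beta_nonneg beta_less_one news_nonneg
    by (intro sum_mono mult_left_le_one_le) (auto intro: power_le_one)
  also have "\<dots> = (\<Sum>k<Suc m. news (x k)) - news (x 0)"
    by (subst sum.lessThan_Suc_shift) simp
  also have "\<dots> = (\<Sum>k\<le>m. news (x k)) - news (x 0)"
    by (simp only: lessThan_Suc_atMost)
  finally have "s + news (x 0) \<le> (\<Sum>k\<le>m. news (x k))"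
    by simp
  moreover have "0 \<le> s"
    unfolding s_def using beta_nonneg news_nonneg by (intro sum_nonneg) auto
  ultimately have s_le: "s / 2 + news (x 0) / 2 \<le> (\<Sum>k\<le>m. news (x k))"
    using news_nonneg[of "x 0"] by linarith
  have one_le_exp: "1 \<le> exp (\<Sum>k\<le>m. news (x k))"
    by (simp add: sum_nonneg news_nonneg)
  have "news (x 0) / 2 \<le> exp (news (x 0) / 2)"
    using exp_ge_add_one_self[of "news (x 0) / 2"] by linarith
  then have "1 / 2 * exp (1 / 2 * s) * news (x 0) \<le> exp (s / 2) * exp (news (x 0) / 2)"
    using mult_left_mono[of "news (x 0) / 2" "exp (news (x 0) / 2)" "exp (s / 2)"] by simp
  also have "\<dots> \<le> exp (\<Sum>k\<le>m. news (x k))"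
    using s_le by (simp flip: exp_add)
  finally have "1 / 2 * exp (1 / 2 * s) * news (x 0) - \<beta> \<le> exp (\<Sum>k\<le>m. news (x k))"
    using beta_nonneg by linarith
  moreover have "\<beta> \<le> exp (\<Sum>k\<le>m. news (x k))"
    using one_le_exp beta_less_one by linarith
  ultimately show ?thesis
    by (simp add: window_rate_def s_def)
qed

lemma ln_trunc_window_rate_bounds:
  assumes "0 \<le> L"
  shows "- L \<le> ln_trunc L (window_rate m x)" "ln_trunc L (window_rate m x) \<le> (\<Sum>k\<le>m. news (x k))"
proof -
  show "- L \<le> ln_trunc L (window_rate m x)"
    by (rule ln_trunc_ge)
  show "ln_trunc L (window_rate m x) \<le> (\<Sum>k\<le>m. news (x k))"
    by (rule ln_trunc_le_of_le_exp[OF assms _ window_rate_le_exp]) (simp add: sum_nonneg news_nonneg)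
qed

lemma square_integrable_ln_trunc_window_rate:
  assumes "0 \<le> L"
  shows "integrable M (\<lambda>\<omega>. (ln_trunc L (window_rate m (window m t \<omega>)))\<^sup>2)"
proof (rule Bochner_Integration.integrable_bound)
  define V where "V \<omega> = (\<Sum>k\<le>m. shock (t - int k) \<omega>)" for \<omega>
  show "integrable M (\<lambda>\<omega>. L\<^sup>2 + real (Suc m) * (\<Sum>k\<le>m. (shock (t - int k) \<omega>)\<^sup>2))"
    using square_integrable_shock by simp
  show "AE \<omega> in M. norm ((ln_trunc L (window_rate m (window m t \<omega>)))\<^sup>2)
      \<le> norm (L\<^sup>2 + real (Suc m) * (\<Sum>k\<le>m. (shock (t - int k) \<omega>)\<^sup>2))"
  proof (intro AE_I2)
    fix \<omega>
    have "(\<Sum>k\<le>m. news (window m t \<omega> k)) = V \<omega>"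
      by (simp add: V_def window_apply shock_def)
    then have "\<bar>ln_trunc L (window_rate m (window m t \<omega>))\<bar> \<le> max L (V \<omega>)"
      using ln_trunc_window_rate_bounds[OF assms, of m "window m t \<omega>"] by linarith
    then have "(ln_trunc L (window_rate m (window m t \<omega>)))\<^sup>2 \<le> (max L (V \<omega>))\<^sup>2"
      by (metis abs_le_square_iff abs_of_nonneg assms max.coboundedI1)
    also have "\<dots> \<le> L\<^sup>2 + (V \<omega>)\<^sup>2"
      by (simp add: max_def)
    also have "(V \<omega>)\<^sup>2 \<le> (\<Sum>k\<le>m. (shock (t - int k) \<omega>)\<^sup>2) * card {..m}"
      unfolding V_def by (rule sum_squared_le_sum_of_squares)
    finally show "norm ((ln_trunc L (window_rate m (window m t \<omega>)))\<^sup>2)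
        \<le> norm (L\<^sup>2 + real (Suc m) * (\<Sum>k\<le>m. (shock (t - int k) \<omega>)\<^sup>2))"
      by (simp add: mult.commute)
  qed
qed measurable

lemma news_egarch_X:
  "\<gamma> * egarch_X \<alpha> \<beta> \<gamma> \<delta> Z t \<omega> + \<delta> * \<bar>egarch_X \<alpha> \<beta> \<gamma> \<delta> Z t \<omega>\<bar> = exp (logsig t \<omega> / 2) * shock t \<omega>"
  using news_mult[of "exp (logsig t \<omega> / 2)" "Z t \<omega>"] by (simp add: egarch_X_def news_def shock_def)

lemma loghat_ge:
  assumes "\<alpha> / (1 - \<beta>) \<le> s0"
  shows "\<alpha> / (1 - \<beta>) \<le> loghat s0 t \<omega>"
proof (induction t)
  case 0
  then show ?case
    using assms by simp
next
  case (Suc t)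
  have "\<alpha> + \<beta> * (\<alpha> / (1 - \<beta>)) = \<alpha> / (1 - \<beta>)"
    using beta_less_one by (simp add: field_simps)
  moreover have "\<beta> * (\<alpha> / (1 - \<beta>)) \<le> \<beta> * loghat s0 t \<omega>"
    using Suc beta_nonneg by (rule mult_left_mono)
  moreover have "0 \<le> exp (logsig t \<omega> / 2) * shock t \<omega> * exp (- loghat s0 t \<omega> / 2)"
    by (simp add: shock_nonneg)
  ultimately show ?case
    by (simp add: news_egarch_X)
qed

lemma logsig_ge: "S_summable \<omega> \<Longrightarrow> \<alpha> / (1 - \<beta>) \<le> logsig t \<omega>"
  using S_nonneg by (simp add: logsig_eq)

lemma logsig_Suc:
  assumes "S_summable \<omega>"
  shows "logsig (t + 1) \<omega> = \<alpha> + \<beta> * logsig t \<omega> + shock t \<omega>"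
proof -
  have "logsig (t + 1) \<omega> = \<alpha> / (1 - \<beta>) + shock t \<omega> + \<beta> * S t \<omega>"
    unfolding logsig_eq S_Suc[OF assms] by simp
  then show ?thesis
    using beta_less_one by (simp add: logsig_eq field_simps)
qed

lemma abs_loghat_minus_logsig_Suc_le:
  assumes "\<alpha> / (1 - \<beta>) \<le> s0" "S_summable \<omega>"
  shows "\<bar>loghat s0 (Suc t) \<omega> - logsig (int (Suc t)) \<omega>\<bar> \<le> rate t \<omega> * \<bar>loghat s0 t \<omega> - logsig t \<omega>\<bar>"
proof -
  define C where "C = exp (logsig t \<omega> / 2) * shock t \<omega>"
  have "logsig (int (Suc t)) \<omega> = logsig (int t + 1) \<omega>"
    by (simp add: add.commute)
  also have "\<dots> = \<alpha> + \<beta> * logsig t \<omega> + C * exp (- logsig t \<omega> / 2)"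
    unfolding logsig_Suc[OF assms(2)] C_def by (simp add: mult.assoc flip: exp_add)
  finally have "logsig (int (Suc t)) \<omega> = \<alpha> + \<beta> * logsig t \<omega> + C * exp (- logsig t \<omega> / 2)" .
  then have "\<bar>loghat s0 (Suc t) \<omega> - logsig (int (Suc t)) \<omega>\<bar>
      = \<bar>(\<beta> * loghat s0 t \<omega> + C * exp (- loghat s0 t \<omega> / 2)) - (\<beta> * logsig t \<omega> + C * exp (- logsig t \<omega> / 2))\<bar>"
    by (simp add: news_egarch_X C_def)
  also have "\<dots> \<le> max \<beta> (C * exp (- (\<alpha> / (1 - \<beta>)) / 2) / 2 - \<beta>) * \<bar>loghat s0 t \<omega> - logsig t \<omega>\<bar>"
    using beta_nonneg shock_nonneg loghat_ge[OF assms(1)] logsig_ge[OF assms(2)]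
    by (intro abs_diff_linear_plus_exp_le) (simp_all add: C_def)
  also have "C * exp (- (\<alpha> / (1 - \<beta>)) / 2) / 2 = 1 / 2 * exp (1 / 2 * S t \<omega>) * shock t \<omega>"
  proof -
    have "logsig t \<omega> / 2 + - (\<alpha> / (1 - \<beta>)) / 2 = 1 / 2 * S t \<omega>"
      unfolding logsig_eq by (simp add: add_divide_distrib)
    then have "exp (logsig t \<omega> / 2) * exp (- (\<alpha> / (1 - \<beta>)) / 2) = exp (1 / 2 * S t \<omega>)"
      by (simp flip: exp_add)
    moreover have "C * exp (- (\<alpha> / (1 - \<beta>)) / 2) / 2
        = 1 / 2 * (exp (logsig t \<omega> / 2) * exp (- (\<alpha> / (1 - \<beta>)) / 2)) * shock t \<omega>"
      by (simp add: C_def ac_simps)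
    ultimately show ?thesis
      by simp
  qed
  finally show ?thesis
    by (simp add: rate_def)
qed

lemma abs_loghat_minus_logsig_le:
  assumes "\<alpha> / (1 - \<beta>) \<le> s0" "S_summable \<omega>"
  shows "\<bar>loghat s0 t \<omega> - logsig t \<omega>\<bar>
    \<le> \<bar>loghat s0 0 \<omega> - logsig 0 \<omega>\<bar> * exp (\<Sum>i<t. ln_trunc L (rate (int i) \<omega>))"
proof (induction t)
  case 0
  then show ?case
    by simp
next
  case (Suc t)
  have "\<bar>loghat s0 (Suc t) \<omega> - logsig (int (Suc t)) \<omega>\<bar> \<le> rate t \<omega> * \<bar>loghat s0 t \<omega> - logsig t \<omega>\<bar>"
    by (rule abs_loghat_minus_logsig_Suc_le[OF assms])
  also have "\<dots> \<le> exp (ln_trunc L (rate t \<omega>))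
      * (\<bar>loghat s0 0 \<omega> - logsig 0 \<omega>\<bar> * exp (\<Sum>i<t. ln_trunc L (rate (int i) \<omega>)))"
    using beta_nonneg by (intro mult_mono le_exp_ln_trunc Suc) (auto simp: rate_def)
  also have "\<dots> = \<bar>loghat s0 0 \<omega> - logsig 0 \<omega>\<bar> * exp (\<Sum>i<Suc t. ln_trunc L (rate (int i) \<omega>))"
    by (simp add: exp_add)
  finally show ?case .
qed

lemma eventually_sum_ln_trunc_rate_le_linear:
  assumes "S_summable \<omega>"
    and windows: "eventually (\<lambda>n. (\<Sum>i<n. ln_trunc L (window_rate m (window m (int i) \<omega>))) \<le> real n * a) sequentially"
    and shocks: "eventually (\<lambda>n. (\<Sum>i<n. shock (int i - int m) \<omega>) \<le> real n * b) sequentially"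
    and slope: "a + \<beta> ^ m * b / (1 - \<beta>) \<le> - \<theta>"
  shows "eventually (\<lambda>n. (\<Sum>i<n. ln_trunc L (rate (int i) \<omega>))
    \<le> \<beta> ^ m * S (- int m) \<omega> / (1 - \<beta>) - \<theta> * n) sequentially"
  using windows shocks
proof eventually_elim
  case (elim n)
  define R where "R i = S (int i - int m) \<omega>" for i
  have "(\<Sum>i<n. R i) \<le> (R 0 + (\<Sum>i<n. shock (int i - int m) \<omega>)) / (1 - \<beta>)"
  proof (rule sum_le_of_linear_recurrence)
    show "0 \<le> R i" for i
      using S_nonneg[OF assms(1)] by (simp add: R_def)
    show "R (Suc i) = shock (int i - int m) \<omega> + \<beta> * R i" for i
      using S_Suc[OF assms(1), of "int i - int m"] by (simp add: R_def algebra_simps)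
  qed (rule beta_less_one)
  also have "\<dots> \<le> (R 0 + real n * b) / (1 - \<beta>)"
    using elim(2) beta_less_one by (intro divide_right_mono) auto
  finally have "\<beta> ^ m * (\<Sum>i<n. R i) \<le> \<beta> ^ m * ((R 0 + real n * b) / (1 - \<beta>))"
    using beta_nonneg by (intro mult_left_mono) auto
  also have "\<dots> = \<beta> ^ m * S (- int m) \<omega> / (1 - \<beta>) + real n * (\<beta> ^ m * b / (1 - \<beta>))"
    by (simp add: R_def add_divide_distrib algebra_simps)
  finally have "\<beta> ^ m * (\<Sum>i<n. R i)
      \<le> \<beta> ^ m * S (- int m) \<omega> / (1 - \<beta>) + real n * (\<beta> ^ m * b / (1 - \<beta>))" .
  moreover have "(\<Sum>i<n. ln_trunc L (rate (int i) \<omega>))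
      \<le> (\<Sum>i<n. ln_trunc L (window_rate m (window m (int i) \<omega>))) + \<beta> ^ m * (\<Sum>i<n. R i)"
    unfolding R_def sum_distrib_left sum.distrib[symmetric]
    by (intro sum_mono ln_trunc_rate_le_window_rate assms)
  moreover have "real n * (a + \<beta> ^ m * b / (1 - \<beta>)) \<le> - (\<theta> * n)"
    using mult_left_mono[OF slope, of "real n"] by (simp add: mult.commute)
  ultimately show ?case
    using elim(1) unfolding distrib_left by linarith
qed

lemma logsig_le_linear:
  assumes "S_summable \<omega>" and shock_le: "\<And>t. shock (int t) \<omega> \<le> K + c * t" and "0 \<le> c" "0 \<le> K"
  shows "logsig (int t) \<omega> \<le> \<alpha> / (1 - \<beta>) + S 0 \<omega> + (K + c * t) / (1 - \<beta>)"
proof -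
  have "S (int t) \<omega> \<le> S (int 0) \<omega> + (K + c * t) / (1 - \<beta>)"
  proof (rule linear_recurrence_le_linear[where S = "\<lambda>t. S (int t) \<omega>"])
    show "S (int (Suc t)) \<omega> = shock (int t) \<omega> + \<beta> * S (int t) \<omega>" for t
      using S_Suc[OF assms(1), of "int t"] by (simp add: add.commute)
  qed (use assms beta_nonneg beta_less_one S_nonneg in auto)
  then show ?thesis
    by (simp add: logsig_eq)
qed

lemma tendsto_geometric_mult_abs_exp_loghat_minus_exp_logsig:
  fixes C \<theta> c \<kappa> :: real
  assumes "\<alpha> / (1 - \<beta>) \<le> s0" "S_summable \<omega>"
    and rates: "eventually (\<lambda>n. (\<Sum>i<n. ln_trunc L (rate (int i) \<omega>)) \<le> C - \<theta> * n) sequentially"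
    and shocks: "eventually (\<lambda>t. shock (int t) \<omega> \<le> c * (t + 1)) sequentially"
    and "0 < \<theta>" "0 \<le> c" "\<kappa> + c / (1 - \<beta>) < \<theta>"
  shows "(\<lambda>t. exp \<kappa> ^ t * \<bar>exp (loghat s0 t \<omega>) - exp (logsig t \<omega>)\<bar>) \<longlonglongrightarrow> 0"
proof -
  define D where "D = \<bar>loghat s0 0 \<omega> - logsig 0 \<omega>\<bar>"
  have "eventually (\<lambda>t. \<bar>loghat s0 t \<omega> - logsig t \<omega>\<bar> \<le> D * exp C * exp (- \<theta> * t)) sequentially"
    using rates
  proof eventually_elim
    case (elim t)
    have "\<bar>loghat s0 t \<omega> - logsig t \<omega>\<bar> \<le> D * exp (\<Sum>i<t. ln_trunc L (rate (int i) \<omega>))"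
      unfolding D_def by (rule abs_loghat_minus_logsig_le[OF assms(1,2)])
    also have "\<dots> \<le> D * exp (C - \<theta> * t)"
      using elim by (intro mult_left_mono) (auto simp: D_def)
    finally show ?case
      by (simp add: exp_diff exp_minus field_simps)
  qed
  moreover obtain K where "0 \<le> K" "\<And>t. shock (int t) \<omega> \<le> K + c * t"
    using eventually_le_linear_imp_le_linear[OF shocks \<open>0 \<le> c\<close>] by blast
  then have "logsig (int t) \<omega> \<le> (\<alpha> / (1 - \<beta>) + S 0 \<omega> + K / (1 - \<beta>)) + c / (1 - \<beta>) * t" for t
    using logsig_le_linear[OF assms(2), of K c t] add_divide_distrib[of K "c * t" "1 - \<beta>"] \<open>0 \<le> c\<close>
    by simp
  ultimately show ?thesis
    using assms by (intro tendsto_geometric_mult_abs_exp_diff) auto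
qed

lemma AE_eventually_sum_ln_trunc_window_rate_le:
  assumes "0 \<le> L" "0 < \<epsilon>"
  shows "AE \<omega> in M. eventually (\<lambda>n. (\<Sum>i<n. ln_trunc L (window_rate m (window m (int i) \<omega>)))
    \<le> real n * ((\<integral>\<omega>. ln_trunc L (window_rate m (window m 0 \<omega>)) \<partial>M) + \<epsilon>)) sequentially"
proof (rule AE_eventually_sum_window_le[where b = "- L"])
  show "(\<lambda>x. ln_trunc L (window_rate m x)) \<in> borel_measurable (PiM {..m} (\<lambda>_. borel))"
    by measurable
qed (use assms ln_trunc_window_rate_bounds square_integrable_ln_trunc_window_rate in auto)

lemma AE_eventually_sum_shock_le:
  assumes "0 < \<epsilon>"
  shows "AE \<omega> in M. eventually (\<lambda>n. (\<Sum>i<n. shock (int i - int m) \<omega>)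
    \<le> real n * ((\<integral>\<omega>. shock 0 \<omega> \<partial>M) + \<epsilon>)) sequentially"
proof -
  have shock_window: "news (window m t \<omega> m) = shock (t - int m) \<omega>" for t \<omega>
    by (simp add: window_apply shock_def)
  have "AE \<omega> in M. eventually (\<lambda>n. (\<Sum>i<n. news (window m (int i) \<omega> m))
      \<le> real n * ((\<integral>\<omega>. news (window m 0 \<omega> m) \<partial>M) + \<epsilon>)) sequentially"
  proof (rule AE_eventually_sum_window_le[where b = 0])
    show "(\<lambda>x. news (x m)) \<in> borel_measurable (PiM {..m} (\<lambda>_. borel))"
      by (intro measurable_compose[OF measurable_component_singleton[of m "{..m}"] news_measurable]) simp
  qed (use assms news_nonneg square_integrable_shock in \<open>auto simp: shock_window\<close>)
  then show ?thesis
    by (simp add: shock_window integral_shock[of "- int m"])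
qed

lemma AE_eventually_shock_le_linear:
  fixes c :: real
  assumes "0 < c"
  shows "AE \<omega> in M. eventually (\<lambda>t. shock (int t) \<omega> \<le> c * (t + 1)) sequentially"
proof -
  let ?W = "\<integral>\<omega>. (shock 0 \<omega>)\<^sup>2 \<partial>M"
  have "AE \<omega> in M. eventually (\<lambda>t. \<bar>shock (int t) \<omega>\<bar> < c * (t + 1)) sequentially"
  proof (rule AE_eventually_abs_less_of_summable_second_moments)
    have "(\<integral>\<omega>. (shock (int t) \<omega>)\<^sup>2 \<partial>M) / (c * (t + 1))\<^sup>2 = ?W / c\<^sup>2 * inverse (real (Suc t) ^ 2)" for t
      using integral_shock_square[of "int t"] by (simp add: power_mult_distrib divide_inverse)
    moreover have "summable (\<lambda>t. ?W / c\<^sup>2 * inverse (real (Suc t) ^ 2))"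
      by (intro summable_mult) (subst summable_Suc_iff, rule inverse_power_summable, simp)
    ultimately show "summable (\<lambda>t. (\<integral>\<omega>. (shock (int t) \<omega>)\<^sup>2 \<partial>M) / (c * (t + 1))\<^sup>2)"
      by simp
  qed (use assms square_integrable_shock in auto)
  then show ?thesis
    by eventually_elim (auto elim: eventually_mono)
qed

lemma integral_ln_trunc_window_rate_le:
  assumes "0 \<le> L" "integrable M (\<lambda>\<omega>. ln_trunc L (rate 0 \<omega>))"
  shows "(\<integral>\<omega>. ln_trunc L (window_rate m (window m 0 \<omega>)) \<partial>M) \<le> (\<integral>\<omega>. ln_trunc L (rate 0 \<omega>) \<partial>M)"
proof (rule integral_mono_AE[OF _ assms(2)])
  show "integrable M (\<lambda>\<omega>. ln_trunc L (window_rate m (window m 0 \<omega>)))"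
    by (rule square_integrable_imp_integrable[OF _ square_integrable_ln_trunc_window_rate[OF assms(1)]])
      measurable
  show "AE \<omega> in M. ln_trunc L (window_rate m (window m 0 \<omega>)) \<le> ln_trunc L (rate 0 \<omega>)"
    using AE_S_summable by eventually_elim (intro ln_trunc_mono window_rate_le_rate)
qed

theorem invertible:
  assumes "\<alpha> / (1 - \<beta>) \<le> s0" and "expect_log_neg M (egarch_inv_arg \<beta> \<gamma> \<delta> Z)"
  shows "\<exists>\<rho>::real. \<rho> > 1 \<and>
    (AE \<omega> in M. (\<lambda>t. \<rho> ^ t * \<bar>exp (loghat s0 t \<omega>) - exp (logsig (int t) \<omega>)\<bar>) \<longlonglongrightarrow> 0)"
proof -
  have "egarch_inv_arg \<beta> \<gamma> \<delta> Z \<in> borel_measurable M"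
    unfolding egarch_inv_arg_def by measurable
  then obtain L where L: "0 \<le> L" "integrable M (\<lambda>\<omega>. ln_trunc L (rate 0 \<omega>))"
    and "(\<integral>\<omega>. ln_trunc L (rate 0 \<omega>) \<partial>M) < 0"
    using expect_log_neg_imp_integral_ln_trunc_neg[OF _ assms(2)] by (auto simp: egarch_inv_arg_eq)
  define \<eta> where "\<eta> = - (\<integral>\<omega>. ln_trunc L (rate 0 \<omega>) \<partial>M)"
  have "0 < \<eta>" "0 < \<eta> / 4"
    using \<open>(\<integral>\<omega>. ln_trunc L (rate 0 \<omega>) \<partial>M) < 0\<close> by (simp_all add: \<eta>_def)
  \<comment> \<open>\<open>m\<close> makes the tail contribution to the rates at most \<open>\<eta> / 4\<close>; \<open>c\<close> gives \<open>log \<sigma>\<^sub>t\<^sup>2\<close> slope \<open>\<eta> / 6\<close>.\<close>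
  define \<mu> where "\<mu> = (\<integral>\<omega>. shock 0 \<omega> \<partial>M)"
  obtain m where m: "\<beta> ^ m * ((\<mu> + 1) / (1 - \<beta>)) < \<eta> / 4"
    using exists_power_mult_less[OF beta_nonneg beta_less_one \<open>0 < \<eta> / 4\<close>] by blast
  define c where "c = \<eta> * (1 - \<beta>) / 6"
  have "0 < c" "c / (1 - \<beta>) = \<eta> / 6"
    using \<open>0 < \<eta>\<close> beta_less_one by (simp_all add: c_def field_simps)
  define a where "a = (\<integral>\<omega>. ln_trunc L (window_rate m (window m 0 \<omega>)) \<partial>M) + \<eta> / 4"
  have a_le: "a \<le> - \<eta> + \<eta> / 4"
    using integral_ln_trunc_window_rate_le[OF L] by (simp add: a_def \<eta>_def)
  have "AE \<omega> in M. (\<lambda>t. exp (\<eta> / 6) ^ t * \<bar>exp (loghat s0 t \<omega>) - exp (logsig (int t) \<omega>)\<bar>) \<longlonglongrightarrow> 0"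
    using AE_S_summable AE_eventually_sum_ln_trunc_window_rate_le[OF \<open>0 \<le> L\<close> \<open>0 < \<eta> / 4\<close>, of m]
      AE_eventually_sum_shock_le[OF zero_less_one, of m] AE_eventually_shock_le_linear[OF \<open>0 < c\<close>]
  proof eventually_elim
    case (elim \<omega>)
    have "a + \<beta> ^ m * (\<mu> + 1) / (1 - \<beta>) \<le> - (\<eta> / 2)"
      using a_le m unfolding times_divide_eq_right by linarith
    with elim have "eventually (\<lambda>n. (\<Sum>i<n. ln_trunc L (rate (int i) \<omega>))
        \<le> \<beta> ^ m * S (- int m) \<omega> / (1 - \<beta>) - \<eta> / 2 * n) sequentially"
      by (intro eventually_sum_ln_trunc_rate_le_linear) (simp_all add: a_def \<mu>_def)
    moreover have "0 < \<eta> / 2" "0 \<le> c" "\<eta> / 6 + c / (1 - \<beta>) < \<eta> / 2"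
      using \<open>0 < \<eta>\<close> \<open>0 < c\<close> \<open>c / (1 - \<beta>) = \<eta> / 6\<close> by simp_all
    ultimately show ?case
      by (rule tendsto_geometric_mult_abs_exp_loghat_minus_exp_logsig[OF assms(1) elim(1) _ elim(4)])
  qed
  moreover have "1 < exp (\<eta> / 6)"
    using \<open>0 < \<eta>\<close> by simp
  ultimately show ?thesis
    by blast
qed

end

theorem proposition3p9:
  fixes M :: "'a measure" and Z :: "int \<Rightarrow> 'a \<Rightarrow> real"
    and \<alpha> \<beta> \<gamma> \<delta> s0 :: real
  assumes "prob_space M"
    and indep: "prob_space.indep_vars M (\<lambda>_. borel) Z UNIV"
    and ident: "\<And>t. distr M borel (Z t) = distr M borel (Z 0)"
    and int1: "integrable M (Z 0)" and mean0: "(\<integral>\<omega>. Z 0 \<omega> \<partial>M) = 0"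
    and int2: "integrable M (\<lambda>\<omega>. (Z 0 \<omega>)\<^sup>2)" and var1: "(\<integral>\<omega>. (Z 0 \<omega>)\<^sup>2 \<partial>M) = 1"
    and beta: "0 \<le> \<beta>" "\<beta> < 1"
    and delta: "\<delta> \<ge> \<bar>\<gamma>\<bar>"
    and s0: "s0 \<ge> \<alpha> / (1 - \<beta>)"
    and cond: "expect_log_neg M (egarch_inv_arg \<beta> \<gamma> \<delta> Z)"
  shows "\<exists>\<rho>::real. \<rho> > 1 \<and>
    (AE \<omega> in M. (\<lambda>t::nat. \<rho> ^ t *
        \<bar>exp (egarch_loghat \<alpha> \<beta> \<gamma> \<delta> Z s0 t \<omega>) - exp (egarch_logsig \<alpha> \<beta> \<gamma> \<delta> Z (int t) \<omega>)\<bar>)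
      \<longlonglongrightarrow> 0)"
proof -
  have "egarch M Z \<beta> \<gamma> \<delta>"
    by (intro egarch.intro iid_seq.intro iid_seq_axioms.intro egarch_axioms.intro) (fact assms)+
  then interpret egarch M Z \<alpha> \<beta> \<gamma> \<delta> .
  show ?thesis
    by (rule invertible[OF s0 cond])
qed

end
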